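(* Let $S$ be a set and let $P$ be a specific set of $S$-probabilities all of whose elements are varying. Then: (i) $P$ is complemented, i.e. $p\wedge p'=0$ for every $p\in P$, and hence $P$ (with the pointwise order and $p\mapsto p'=1-p$) is an orthoposet; (ii) if $p,q\in P$ and $p\perp q$, then $p\wedge q=0$; (iii) $P$ is a generalized field of events (GFE).
   Context: An $S$-probability is a function $p\colon S\to[0,1]$. A set $P$ of $S$-probabilities is partially ordered by the pointwise order of functions; $0$ and $1$ denote the constant functions, $p':=1-p$, and $p+q$ denotes the pointwise sum. For $p,q\in P$ (with $0\in P$) one writes $p\wedge q=0$ ("$p$ and $q$ are disjoint") if the only $x\in P$ with $x\le p$ and $x\le q$ is $x=0$. One writes $p\perp q$ ("orthogonal") if $p\le q'=1-q$. A set $P$ of $S$-probabilities is specific if (1) $0,1\in P$; (2) $p\in P$ implies $1-p\in P$; (3) if $p,q\in P$ and $p\wedge q=0$ then $p+q\in P$. An $S$-probability $p$ is varying if either $p\in\{0,1\}$, or $p$ is neither $\le 1/2$ everywhere nor $\ge 1/2$ everywhere (i.e. if $p\le 1/2$ or $p\ge1/2$ pointwise, then $p=0$ or $p=1$). An orthoposet is a bounded poset with an antitone involution $'$ which is a complementation ($p\wedge p'=0$ and $p\vee p'=1$). A generalized field of events (GFE) is a set $P$ of $S$-probabilities satisfying (1), (2) and (4): if $p,q\in P$ and $p\perp q$ then $p+q\in P$. *)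

theory Defs
  imports Complex_Main "HOL-Library.Function_Algebras"
begin

text \<open>The set S is represented by a type 'a; an S-probability is a function 'a => real
  with values in [0,1]. Order is the pointwise order of functions (le_fun);
  0, 1, p + q, 1 - p are the pointwise constant functions / operations.\<close>

definition S_probability :: "('a \<Rightarrow> real) \<Rightarrow> bool" where
  "S_probability p \<longleftrightarrow> (\<forall>x. 0 \<le> p x \<and> p x \<le> 1)"

definition disjoint_in :: "('a \<Rightarrow> real) set \<Rightarrow> ('a \<Rightarrow> real) \<Rightarrow> ('a \<Rightarrow> real) \<Rightarrow> bool" where
  "disjoint_in P p q \<longleftrightarrow> (\<forall>x\<in>P. x \<le> p \<and> x \<le> q \<longrightarrow> x = 0)"

definition orthogonal :: "('a \<Rightarrow> real) \<Rightarrow> ('a \<Rightarrow> real) \<Rightarrow> bool" where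
  "orthogonal p q \<longleftrightarrow> p \<le> 1 - q"

definition specific :: "('a \<Rightarrow> real) set \<Rightarrow> bool" where
  "specific P \<longleftrightarrow> (\<forall>p\<in>P. S_probability p) \<and> 0 \<in> P \<and> 1 \<in> P
     \<and> (\<forall>p\<in>P. 1 - p \<in> P)
     \<and> (\<forall>p\<in>P. \<forall>q\<in>P. disjoint_in P p q \<longrightarrow> p + q \<in> P)"

definition varying :: "('a \<Rightarrow> real) \<Rightarrow> bool" where
  "varying p \<longleftrightarrow> (((\<forall>x. p x \<le> 1/2) \<or> (\<forall>x. p x \<ge> 1/2)) \<longrightarrow> p = 0 \<or> p = 1)"

definition complemented :: "('a \<Rightarrow> real) set \<Rightarrow> bool" where
  "complemented P \<longleftrightarrow> (\<forall>p\<in>P. disjoint_in P p (1 - p))"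

definition GFE :: "('a \<Rightarrow> real) set \<Rightarrow> bool" where
  "GFE P \<longleftrightarrow> (\<forall>p\<in>P. S_probability p) \<and> 0 \<in> P \<and> 1 \<in> P
     \<and> (\<forall>p\<in>P. 1 - p \<in> P)
     \<and> (\<forall>p\<in>P. \<forall>q\<in>P. orthogonal p q \<longrightarrow> p + q \<in> P)"

definition is_glb_in :: "'b set \<Rightarrow> ('b \<Rightarrow> 'b \<Rightarrow> bool) \<Rightarrow> 'b \<Rightarrow> 'b \<Rightarrow> 'b \<Rightarrow> bool" where
  "is_glb_in A le a b m \<longleftrightarrow> m \<in> A \<and> le m a \<and> le m b \<and> (\<forall>x\<in>A. le x a \<and> le x b \<longrightarrow> le x m)"

definition is_lub_in :: "'b set \<Rightarrow> ('b \<Rightarrow> 'b \<Rightarrow> bool) \<Rightarrow> 'b \<Rightarrow> 'b \<Rightarrow> 'b \<Rightarrow> bool" where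
  "is_lub_in A le a b m \<longleftrightarrow> m \<in> A \<and> le a m \<and> le b m \<and> (\<forall>x\<in>A. le a x \<and> le b x \<longrightarrow> le m x)"

definition orthoposet :: "'b set \<Rightarrow> ('b \<Rightarrow> 'b \<Rightarrow> bool) \<Rightarrow> ('b \<Rightarrow> 'b) \<Rightarrow> 'b \<Rightarrow> 'b \<Rightarrow> bool" where
  "orthoposet A le c z u \<longleftrightarrow>
     (\<forall>x\<in>A. le x x)
     \<and> (\<forall>x\<in>A. \<forall>y\<in>A. le x y \<and> le y x \<longrightarrow> x = y)
     \<and> (\<forall>x\<in>A. \<forall>y\<in>A. \<forall>w\<in>A. le x y \<and> le y w \<longrightarrow> le x w)
     \<and> z \<in> A \<and> u \<in> A \<and> (\<forall>x\<in>A. le z x \<and> le x u)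
     \<and> (\<forall>x\<in>A. c x \<in> A \<and> c (c x) = x)
     \<and> (\<forall>x\<in>A. \<forall>y\<in>A. le x y \<longrightarrow> le (c y) (c x))
     \<and> (\<forall>x\<in>A. is_glb_in A le x (c x) z \<and> is_lub_in A le x (c x) u)"

end

theory Submission
  imports Defs
begin

text \<open>A varying function below both q and 1 - q is bounded by 1/2, hence is 0 or 1, and 1 is
  excluded since 1 \<le> q and 1 \<le> 1 - q cannot hold together. Thus common lower bounds of
  q and 1 - q vanish, which is complementedness; orthogonality of p and q makes every common
  lower bound of p and q also one of q and 1 - q, so the GFE axiom reduces to the specific one.\<close>

lemma varying_le_and_le_complement_eq_0:
  fixes x q :: "'a \<Rightarrow> real"
  assumes "varying x" and "x \<le> q" and "x \<le> 1 - q"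
  shows "x = 0"
proof -
  have below: "x s \<le> q s" "x s \<le> 1 - q s" for s
    using assms(2,3) by (simp_all add: le_fun_def)
  have "x s \<le> 1/2" for s
    using below[of s] by linarith
  with assms(1) have "x = 0 \<or> x = 1"
    unfolding varying_def by blast
  moreover have "x \<noteq> 1"
    using below[of undefined] by auto
  ultimately show ?thesis
    by blast
qed

lemma disjoint_in_complement:
  assumes "\<forall>p\<in>P. varying p"
  shows "disjoint_in P q (1 - q)"
  using assms varying_le_and_le_complement_eq_0 unfolding disjoint_in_def by blast

lemma orthogonal_imp_disjoint_in:
  assumes "\<forall>p\<in>P. varying p" and "orthogonal p q"
  shows "disjoint_in P p q"
  using assms(2) disjoint_in_complement[OF assms(1), of q] order_trans
  unfolding disjoint_in_def orthogonal_def by metis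

lemma specific_bounds:
  assumes "specific P" and "p \<in> P"
  shows "0 \<le> p" and "p \<le> 1"
  using assms unfolding specific_def S_probability_def by (simp_all add: le_fun_def)

lemma specific_complemented_orthoposet:
  assumes spec: "specific P" and compl: "complemented P"
  shows "orthoposet P (\<le>) (\<lambda>p. 1 - p) 0 1"
proof -
  have closed: "0 \<in> P" "1 \<in> P" "\<And>p. p \<in> P \<Longrightarrow> 1 - p \<in> P"
    using spec unfolding specific_def by blast+
  have glb: "y \<le> 0" if "x \<in> P" "y \<in> P" "y \<le> x" "y \<le> 1 - x" for x y
    using compl that unfolding complemented_def disjoint_in_def by auto
  have lub: "1 \<le> y" if "x \<in> P" "y \<in> P" "x \<le> y" "1 - x \<le> y" for x y
  proof -
    \<comment> \<open>1 - y is a common lower bound of 1 - x and its complement x\<close>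
    have "1 - y \<le> 1 - x" "1 - y \<le> 1 - (1 - x)"
      using that(3,4) by (auto simp: le_fun_def algebra_simps)
    then have "1 - y = 0"
      using compl closed(3)[OF that(1)] closed(3)[OF that(2)]
      unfolding complemented_def disjoint_in_def by blast
    then show ?thesis
      by simp
  qed
  have antitone: "x \<le> y \<Longrightarrow> 1 - y \<le> 1 - x" for x y :: "'a \<Rightarrow> real"
    by (simp add: le_fun_def)
  show ?thesis
    unfolding orthoposet_def is_glb_in_def is_lub_in_def
    using specific_bounds[OF spec] closed glb lub antitone
    by (auto intro: order_trans antisym)
qed

lemma specific_GFE:
  assumes "specific P" and "\<forall>p\<in>P. \<forall>q\<in>P. orthogonal p q \<longrightarrow> disjoint_in P p q"
  shows "GFE P"
  using assms unfolding specific_def GFE_def by blast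

theorem proposition2p2:
  fixes P :: "('a \<Rightarrow> real) set"
  assumes "specific P"
    and "\<forall>p\<in>P. varying p"
  shows "complemented P
    \<and> orthoposet P (\<le>) (\<lambda>p. 1 - p) 0 1
    \<and> (\<forall>p\<in>P. \<forall>q\<in>P. orthogonal p q \<longrightarrow> disjoint_in P p q)
    \<and> GFE P"
proof -
  have compl: "complemented P"
    using disjoint_in_complement[OF assms(2)] unfolding complemented_def by blast
  have ortho_disj: "\<forall>p\<in>P. \<forall>q\<in>P. orthogonal p q \<longrightarrow> disjoint_in P p q"
    using orthogonal_imp_disjoint_in[OF assms(2)] by blast
  show ?thesis
    using compl specific_complemented_orthoposet[OF assms(1) compl]
      ortho_disj specific_GFE[OF assms(1) ortho_disj]
    by blast
qed

end
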